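(* For every integer $s\geq 3$, the graph $\operatorname{KG}(2s+2,2)_{s-\operatorname{stab}}$ is not hom-idempotent, i.e., there is no homomorphism from $\operatorname{KG}(2s+2,2)_{s-\operatorname{stab}}\Box\operatorname{KG}(2s+2,2)_{s-\operatorname{stab}}$ to $\operatorname{KG}(2s+2,2)_{s-\operatorname{stab}}$.
   Context: For integers $s,k\geq 2$ and $n\geq ks$, a subset $S\subseteq[n]=\{1,\dots,n\}$ is $s$-stable if $s\leq |i-j|\leq n-s$ for all distinct $i,j\in S$. The $s$-stable Kneser graph $\operatorname{KG}(n,k)_{s-\operatorname{stab}}$ has as vertices the $s$-stable $k$-subsets of $[n]$, two vertices being adjacent iff they are disjoint. $G\Box H$ denotes the cartesian product of graphs (vertex set $V(G)\times V(H)$, $(g,h)\sim(g',h')$ iff one coordinate is equal and the other coordinates are adjacent). A homomorphism is an edge-preserving map between vertex sets. *)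

theory Defs
  imports Main
begin

definition s_stable :: "nat \<Rightarrow> nat \<Rightarrow> nat set \<Rightarrow> bool" where
  "s_stable n s S \<longleftrightarrow> S \<subseteq> {1..n} \<and>
     (\<forall>i\<in>S. \<forall>j\<in>S. i \<noteq> j \<longrightarrow>
        s \<le> nat \<bar>int i - int j\<bar> \<and> nat \<bar>int i - int j\<bar> \<le> n - s)"

definition stab_kneser_verts :: "nat \<Rightarrow> nat \<Rightarrow> nat \<Rightarrow> nat set set" where
  "stab_kneser_verts n k s = {S. s_stable n s S \<and> card S = k}"

definition stab_kneser_adj :: "nat set \<Rightarrow> nat set \<Rightarrow> bool" where
  "stab_kneser_adj A B \<longleftrightarrow> A \<inter> B = {}"

definition cart_prod_verts :: "'a set \<Rightarrow> 'b set \<Rightarrow> ('a \<times> 'b) set" where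
  "cart_prod_verts V1 V2 = V1 \<times> V2"

definition cart_prod_adj ::
  "('a \<Rightarrow> 'a \<Rightarrow> bool) \<Rightarrow> ('b \<Rightarrow> 'b \<Rightarrow> bool) \<Rightarrow> ('a \<times> 'b) \<Rightarrow> ('a \<times> 'b) \<Rightarrow> bool" where
  "cart_prod_adj E1 E2 p q \<longleftrightarrow>
     (fst p = fst q \<and> E2 (snd p) (snd q)) \<or> (snd p = snd q \<and> E1 (fst p) (fst q))"

definition graph_hom ::
  "'a set \<Rightarrow> ('a \<Rightarrow> 'a \<Rightarrow> bool) \<Rightarrow> 'b set \<Rightarrow> ('b \<Rightarrow> 'b \<Rightarrow> bool) \<Rightarrow> ('a \<Rightarrow> 'b) \<Rightarrow> bool" where
  "graph_hom V1 E1 V2 E2 f \<longleftrightarrow>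
     (\<forall>x\<in>V1. f x \<in> V2) \<and> (\<forall>x\<in>V1. \<forall>y\<in>V1. E1 x y \<longrightarrow> E2 (f x) (f y))"

end

theory Submission
  imports Defs
begin

text \<open>
  The 2-element s-stable subsets of [2s+2] are the edges of the cubic circulant graph H on [2s+2]
  joining points at cyclic distance s or s+1 (the relation stable_adj), and adjacency in the
  Kneser graph is disjointness. For s \<ge> 3 the graph H is triangle-free, so intersecting families of
  edges are stars; counting then shows that every endomorphism of the Kneser graph is induced by an
  automorphism of H.

  Given a homomorphism f from the square, the sections at y1 = {1, s+1} and y2 = {1, s+2} are
  induced by automorphisms P and Q. Since every section in the other coordinate is induced by an
  automorphism too, and y1, y2 share exactly one point, P and Q map each edge of H to two edges
  sharing exactly one point. If P and Q agree somewhere, triangle-freeness spreads the agreement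
  over all of [2s+2], which contradicts this; otherwise every edge is {u, Q\<inverse> (P u)} for some u,
  leaving room for at most 2s+2 edges instead of 3s+3.
\<close>

definition stable_adj :: "nat \<Rightarrow> nat \<Rightarrow> nat \<Rightarrow> bool" where
  "stable_adj s a b \<longleftrightarrow> 1 \<le> a \<and> a \<le> 2*s+2 \<and> 1 \<le> b \<and> b \<le> 2*s+2 \<and>
     (a + s \<le> b \<and> b \<le> a + s + 2 \<or> b + s \<le> a \<and> a \<le> b + s + 2)"

abbreviation KG :: "nat \<Rightarrow> nat set set" where
  "KG s \<equiv> stab_kneser_verts (2*s+2) 2 s"

abbreviation KG_endo :: "nat \<Rightarrow> (nat set \<Rightarrow> nat set) \<Rightarrow> bool" where
  "KG_endo s g \<equiv> graph_hom (KG s) stab_kneser_adj (KG s) stab_kneser_adj g"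

lemma eq_on_interval_if_eq_Suc:
  assumes "\<And>c. 1 \<le> c \<Longrightarrow> c < n \<Longrightarrow> f c = f (Suc c)" and "c \<in> {1..n}"
  shows "f c = f 1"
proof -
  have "1 \<le> c" "c \<le> n" using assms(2) by auto
  then show ?thesis
  proof (induction c rule: nat_induct_at_least)
    case (Suc c)
    then show ?case using assms(1)[of c] by simp
  qed simp
qed

subsection \<open>The circulant graph\<close>

lemma stable_adj_sym: "stable_adj s a b \<Longrightarrow> stable_adj s b a"
  unfolding stable_adj_def by auto

lemma stable_adj_neq: "1 \<le> s \<Longrightarrow> stable_adj s a b \<Longrightarrow> a \<noteq> b"
  unfolding stable_adj_def by auto

lemma stable_adj_range: "stable_adj s a b \<Longrightarrow> a \<in> {1..2*s+2}"
  unfolding stable_adj_def by auto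

lemma stable_adj_triangle_free:
  "3 \<le> s \<Longrightarrow> stable_adj s a b \<Longrightarrow> stable_adj s b c \<Longrightarrow> \<not> stable_adj s a c"
  unfolding stable_adj_def by linarith

lemma stable_adj_common_neighbour:
  assumes "1 \<le> c" "c < 2*s+2"
  shows "\<exists>d. stable_adj s c d \<and> stable_adj s (Suc c) d"
proof (cases "c \<le> s + 1")
  case True
  then show ?thesis using assms unfolding stable_adj_def by (intro exI[of _ "c+s+1"]) auto
next
  case False
  then show ?thesis using assms unfolding stable_adj_def by (intro exI[of _ "c-s"]) auto
qed

lemma card_stable_neighbours:
  assumes "1 \<le> s" "c \<in> {1..2*s+2}"
  shows "card {d. stable_adj s c d} = 3"
proof -
  consider "c \<le> s" | "c = s+1" | "c = s+2" | k where "c = k + s + 3"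
  proof -
    have "c \<le> s \<or> c = s+1 \<or> c = s+2 \<or> (\<exists>k. c = k + s + 3)"
      by presburger
    then show ?thesis using that by blast
  qed
  then show ?thesis
  proof cases
    case 1
    then have "{d. stable_adj s c d} = {c+s, c+s+1, c+s+2}"
      using assms unfolding stable_adj_def by auto
    then show ?thesis by simp
  next
    case 2
    then have "{d. stable_adj s c d} = {1, 2*s+1, 2*s+2}"
      using assms unfolding stable_adj_def by auto
    then show ?thesis using assms by simp
  next
    case 3
    then have "{d. stable_adj s c d} = {1, 2, 2*s+2}"
      using assms unfolding stable_adj_def by auto
    then show ?thesis using assms by simp
  next
    case 4
    then have "{d. stable_adj s c d} = {k+1, k+2, k+3}"
      using assms unfolding stable_adj_def by auto
    then show ?thesis by simp
  qed
qed

subsection \<open>Vertices of the Kneser graph as edges\<close>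

lemma KG_iff:
  assumes "1 \<le> s"
  shows "v \<in> KG s \<longleftrightarrow> (\<exists>a b. stable_adj s a b \<and> v = {a,b})"
proof
  assume "v \<in> KG s"
  then have stable: "s_stable (2*s+2) s v" and "card v = 2"
    unfolding stab_kneser_verts_def by auto
  then obtain a b where ab: "a \<noteq> b" "v = {a,b}" by (meson card_2_iff)
  with stable have "stable_adj s a b"
    unfolding s_stable_def stable_adj_def by auto
  with ab show "\<exists>a b. stable_adj s a b \<and> v = {a,b}" by blast
next
  assume "\<exists>a b. stable_adj s a b \<and> v = {a,b}"
  then obtain a b where ab: "stable_adj s a b" "v = {a,b}" by blast
  then have "card v = 2" using stable_adj_neq[OF assms] by auto
  moreover have "s_stable (2*s+2) s v"
    using ab unfolding s_stable_def stable_adj_def by auto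
  ultimately show "v \<in> KG s" unfolding stab_kneser_verts_def by auto
qed

lemma doubleton_in_KG_iff:
  assumes "1 \<le> s"
  shows "{a,b} \<in> KG s \<longleftrightarrow> stable_adj s a b"
  unfolding KG_iff[OF assms] by (auto simp: doubleton_eq_iff dest: stable_adj_sym)

lemma KG_vertex_through:
  assumes "1 \<le> s" "v \<in> KG s" "c \<in> v"
  shows "\<exists>d. stable_adj s c d \<and> v = {c,d}"
proof -
  obtain a b where "stable_adj s a b" "v = {a,b}" using assms(2) KG_iff[OF assms(1)] by blast
  with assms(3) show ?thesis by (auto simp: insert_commute dest: stable_adj_sym)
qed

lemma KG_subset: "v \<in> KG s \<Longrightarrow> v \<subseteq> {1..2*s+2}"
  unfolding stab_kneser_verts_def s_stable_def by auto

lemma card_KG_vertex: "v \<in> KG s \<Longrightarrow> card v = 2"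
  unfolding stab_kneser_verts_def by auto

lemma finite_KG: "finite (KG s)"
proof -
  have "KG s \<subseteq> Pow {1..2*s+2}" using KG_subset by blast
  then show ?thesis by (rule finite_subset) simp
qed

definition star :: "nat \<Rightarrow> nat \<Rightarrow> nat set set" where
  "star s c = {v \<in> KG s. c \<in> v}"

lemma card_star:
  assumes "1 \<le> s" "c \<in> {1..2*s+2}"
  shows "card (star s c) = 3"
proof -
  have "star s c = (\<lambda>d. {c,d}) ` {d. stable_adj s c d}"
    using KG_vertex_through[OF assms(1)] doubleton_in_KG_iff[OF assms(1)]
    by (auto simp: star_def)
  moreover have "inj_on (\<lambda>d. {c,d}) {d. stable_adj s c d}"
    by (auto intro!: inj_onI simp: doubleton_eq_iff dest: stable_adj_neq[OF assms(1)])
  ultimately show ?thesis using card_stable_neighbours[OF assms] by (simp add: card_image)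
qed

lemma card_KG:
  assumes "1 \<le> s"
  shows "2 * card (KG s) = 3 * (2*s+2)"
proof -
  have "(\<Sum>v\<in>KG s. card {c\<in>{1..2*s+2}. c \<in> v}) = 3 * card {1..2*s+2}"
    using card_star[OF assms] finite_KG by (intro sum_multicount) (auto simp: star_def)
  moreover have "{c\<in>{1..2*s+2}. c \<in> v} = v" if "v \<in> KG s" for v
    using KG_subset[OF that] by blast
  ultimately show ?thesis by (simp add: card_KG_vertex)
qed

lemma intersecting_family_in_star:
  assumes "3 \<le> s" "F \<subseteq> KG s"
    and intersecting: "\<And>v w. v \<in> F \<Longrightarrow> w \<in> F \<Longrightarrow> v \<inter> w \<noteq> {}"
  shows "\<exists>c\<in>{1..2*s+2}. F \<subseteq> star s c"
proof (cases "F = {}")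
  case False
  have s: "1 \<le> s" using assms(1) by simp
  obtain v0 where v0: "v0 \<in> F" using False by blast
  then have "v0 \<in> KG s" using assms(2) by blast
  then obtain a b where ab: "stable_adj s a b" "v0 = {a,b}" using KG_iff[OF s] by blast
  with v0 have "{a,b} \<in> F" by simp
  have range: "a \<in> {1..2*s+2}" "b \<in> {1..2*s+2}"
    using ab(1) stable_adj_range stable_adj_sym by blast+
  show ?thesis
  proof (cases "\<forall>v\<in>F. a \<in> v")
    case True
    then have "F \<subseteq> star s a" using assms(2) by (auto simp: star_def)
    then show ?thesis using range by blast
  next
    case False
    then obtain w where w: "w \<in> F" "a \<notin> w" by blast
    then have "b \<in> w" using intersecting[OF \<open>{a,b} \<in> F\<close> w(1)] by blast
    then obtain e where e: "stable_adj s b e" "w = {b,e}"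
      using KG_vertex_through[OF s] w(1) assms(2) by blast
    have "b \<in> z" if z: "z \<in> F" for z
    proof (rule ccontr)
      assume "b \<notin> z"
      then have "a \<in> z" "e \<in> z"
        using intersecting[OF \<open>{a,b} \<in> F\<close> z] intersecting[OF w(1) z] e(2) by auto
      moreover obtain d where "stable_adj s a d" "z = {a,d}"
        using KG_vertex_through[OF s] z assms(2) \<open>a \<in> z\<close> by blast
      moreover have "e \<noteq> a" using w(2) e(2) by blast
      ultimately have "stable_adj s a e" by auto
      then show False using stable_adj_triangle_free[OF assms(1) ab(1) e(1)] by blast
    qed
    then have "F \<subseteq> star s b" using assms(2) by (auto simp: star_def)
    then show ?thesis using range by blast
  qed
qed (auto intro: bexI[of _ 1])

subsection \<open>Endomorphisms are induced by automorphisms\<close>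

lemma endo_preimage_in_star:
  assumes "3 \<le> s" "KG_endo s g"
  shows "\<exists>c\<in>{1..2*s+2}. {v \<in> KG s. e \<in> g v} \<subseteq> star s c"
proof (rule intersecting_family_in_star[OF assms(1)])
  fix v w assume "v \<in> {v \<in> KG s. e \<in> g v}" "w \<in> {v \<in> KG s. e \<in> g v}"
  then have "e \<in> g v \<inter> g w" "v \<in> KG s" "w \<in> KG s" by auto
  then show "v \<inter> w \<noteq> {}"
    using assms(2) unfolding graph_hom_def stab_kneser_adj_def by blast
qed blast

lemma sum_card_endo_preimages:
  assumes "1 \<le> s" "KG_endo s g"
  shows "(\<Sum>e\<in>{1..2*s+2}. card {v \<in> KG s. e \<in> g v}) = (\<Sum>e\<in>{1..2*s+2}. 3)"
proof -
  let ?N = "{1..2*s+2}"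
  have "(\<Sum>e\<in>?N. card {v \<in> KG s. e \<in> g v}) = 2 * card (KG s)"
  proof (rule sum_multicount[OF _ finite_KG])
    show "\<forall>v\<in>KG s. card {e \<in> ?N. e \<in> g v} = 2"
    proof
      fix v assume "v \<in> KG s"
      then have "g v \<in> KG s" using assms(2) unfolding graph_hom_def by blast
      then have "{e \<in> ?N. e \<in> g v} = g v" "card (g v) = 2"
        using KG_subset card_KG_vertex by blast+
      then show "card {e \<in> ?N. e \<in> g v} = 2" by simp
    qed
  qed simp
  also have "\<dots> = (\<Sum>e\<in>?N. 3)" using card_KG[OF assms(1)] by simp
  finally show ?thesis .
qed

lemma endo_preimage_eq_star:
  assumes "3 \<le> s" "KG_endo s g" "e \<in> {1..2*s+2}"
  shows "\<exists>c\<in>{1..2*s+2}. {v \<in> KG s. e \<in> g v} = star s c"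
proof -
  let ?N = "{1..2*s+2}"
  let ?T = "\<lambda>e. {v \<in> KG s. e \<in> g v}"
  have s: "1 \<le> s" using assms(1) by simp
  have finite_star: "finite (star s c)" for c
    using finite_KG by (simp add: star_def)
  have T_le: "card (?T x) \<le> 3" for x
  proof -
    obtain c where "c \<in> ?N" "?T x \<subseteq> star s c"
      using endo_preimage_in_star[OF assms(1,2)] by blast
    then show ?thesis using card_mono[OF finite_star] card_star[OF s] by metis
  qed
  have "card (?T e) = 3"
    using sum_mono_inv[OF sum_card_endo_preimages[OF s assms(2)] T_le assms(3)] by simp
  obtain c where c: "c \<in> ?N" "?T e \<subseteq> star s c"
    using endo_preimage_in_star[OF assms(1,2)] by blast
  moreover have "card (?T e) = card (star s c)"
    using \<open>card (?T e) = 3\<close> card_star[OF s c(1)] by simp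
  ultimately have "?T e = star s c"
    using card_subset_eq[OF finite_star] by blast
  then show ?thesis using c(1) by blast
qed

lemma fibre_cards_const:
  assumes s: "1 \<le> s"
    and pairs: "\<And>a b. stable_adj s a b \<Longrightarrow> card {e \<in> {1..2*s+2}. \<pi> e \<in> {a,b}} = 2"
    and c: "c \<in> {1..2*s+2}"
  shows "card {e \<in> {1..2*s+2}. \<pi> e = c} = card {e \<in> {1..2*s+2}. \<pi> e = 1}"
proof -
  let ?N = "{1..2*s+2}"
  define h where "h c = card {e \<in> ?N. \<pi> e = c}" for c
  have h_edge: "h a + h b = 2" if "stable_adj s a b" for a b
  proof -
    have "a \<noteq> b" using stable_adj_neq[OF s that] .
    have "{e \<in> ?N. \<pi> e \<in> {a,b}} = {e \<in> ?N. \<pi> e = a} \<union> {e \<in> ?N. \<pi> e = b}" by blast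
    also have "card \<dots> = h a + h b"
      unfolding h_def by (rule card_Un_disjoint) (use \<open>a \<noteq> b\<close> in auto)
    finally show ?thesis using pairs[OF that] by simp
  qed
  have "h c = h 1"
  proof (rule eq_on_interval_if_eq_Suc[OF _ c])
    fix c assume "1 \<le> c" "c < 2*s+2"
    then obtain d where "stable_adj s c d" "stable_adj s (Suc c) d"
      using stable_adj_common_neighbour by blast
    then have "h c + h d = 2" "h (Suc c) + h d = 2" using h_edge by blast+
    then show "h c = h (Suc c)" by simp
  qed
  then show ?thesis unfolding h_def .
qed

lemma bij_if_edge_preimages_pairs:
  assumes s: "1 \<le> s"
    and into: "\<pi> ` {1..2*s+2} \<subseteq> {1..2*s+2}"
    and pairs: "\<And>a b. stable_adj s a b \<Longrightarrow> card {e \<in> {1..2*s+2}. \<pi> e \<in> {a,b}} = 2"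
  shows "bij_betw \<pi> {1..2*s+2} {1..2*s+2}"
proof -
  let ?N = "{1..2*s+2}"
  let ?h = "\<lambda>c. card {e \<in> ?N. \<pi> e = c}"
  have "(\<Sum>c\<in>?N. ?h c) = 1 * card ?N"
  proof (rule sum_multicount)
    show "\<forall>e\<in>?N. card {c \<in> ?N. \<pi> e = c} = 1"
    proof
      fix e assume "e \<in> ?N"
      then have "\<pi> e \<in> ?N" using into by blast
      then have "{c \<in> ?N. \<pi> e = c} = {\<pi> e}" by blast
      then show "card {c \<in> ?N. \<pi> e = c} = 1" by simp
    qed
  qed simp_all
  moreover have "(\<Sum>c\<in>?N. ?h c) = (\<Sum>c\<in>?N. ?h 1)"
    by (rule sum.cong[OF refl fibre_cards_const[OF s pairs]])
  moreover have "(\<Sum>c\<in>?N. ?h 1) = card ?N * ?h 1" by (simp only: sum_constant of_nat_id)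
  ultimately have "card ?N * ?h 1 = card ?N * 1" by linarith
  moreover have "card ?N \<noteq> 0" by simp
  ultimately have "?h 1 = 1" using mult_left_cancel by blast
  have onto: "?N \<subseteq> \<pi> ` ?N"
  proof
    fix c assume "c \<in> ?N"
    then have "card {e \<in> ?N. \<pi> e = c} = 1"
      using fibre_cards_const[OF s pairs] \<open>?h 1 = 1\<close> by presburger
    then obtain e where "{e \<in> ?N. \<pi> e = c} = {e}" by (rule card_1_singletonE)
    then have "e \<in> {e \<in> ?N. \<pi> e = c}" by simp
    then show "c \<in> \<pi> ` ?N" by blast
  qed
  with into have image: "\<pi> ` ?N = ?N" by (rule subset_antisym)
  then have "inj_on \<pi> ?N" using eq_card_imp_inj_on[of ?N \<pi>] by simp
  with image show ?thesis unfolding bij_betw_def by blast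
qed

lemma preimage_eq_the_inv_into_image:
  assumes "bij_betw \<pi> A A" "v \<subseteq> A"
  shows "{e \<in> A. \<pi> e \<in> v} = the_inv_into A \<pi> ` v"
proof
  have inj: "inj_on \<pi> A" using assms(1) by (rule bij_betw_imp_inj_on)
  show "{e \<in> A. \<pi> e \<in> v} \<subseteq> the_inv_into A \<pi> ` v"
  proof
    fix e assume "e \<in> {e \<in> A. \<pi> e \<in> v}"
    then have "the_inv_into A \<pi> (\<pi> e) = e" "\<pi> e \<in> v"
      using the_inv_into_f_f[OF inj] by auto
    then show "e \<in> the_inv_into A \<pi> ` v" by (metis image_eqI)
  qed
  show "the_inv_into A \<pi> ` v \<subseteq> {e \<in> A. \<pi> e \<in> v}"
    using assms by (auto simp: bij_betw_def f_the_inv_into_f the_inv_into_into)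
qed

lemma endo_is_induced:
  assumes "3 \<le> s" "KG_endo s g"
  shows "\<exists>p. bij_betw p {1..2*s+2} {1..2*s+2} \<and> (\<forall>v\<in>KG s. g v = p ` v)"
proof -
  let ?N = "{1..2*s+2}"
  have s: "1 \<le> s" using assms(1) by simp
  have "\<forall>e\<in>?N. \<exists>c. c \<in> ?N \<and> {v \<in> KG s. e \<in> g v} = star s c"
    using endo_preimage_eq_star[OF assms] by blast
  then obtain \<pi> where \<pi>: "\<forall>e\<in>?N. \<pi> e \<in> ?N \<and> {v \<in> KG s. e \<in> g v} = star s (\<pi> e)"
    by (rule bchoice[THEN exE])
  have g_vertex: "g v \<in> KG s" if "v \<in> KG s" for v
    using assms(2) that unfolding graph_hom_def by blast
  have g_eq: "g v = {e \<in> ?N. \<pi> e \<in> v}" if v: "v \<in> KG s" for v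
  proof -
    have "e \<in> g v \<longleftrightarrow> \<pi> e \<in> v" if "e \<in> ?N" for e
      using \<pi> that v by (auto simp: star_def)
    then show ?thesis using KG_subset[OF g_vertex[OF v]] by blast
  qed
  have bij: "bij_betw \<pi> ?N ?N"
  proof (rule bij_if_edge_preimages_pairs[OF s])
    show "\<pi> ` ?N \<subseteq> ?N" using \<pi> by blast
    fix a b assume "stable_adj s a b"
    then have "{a,b} \<in> KG s" using doubleton_in_KG_iff[OF s] by blast
    then have "card (g {a,b}) = 2" "g {a,b} = {e \<in> ?N. \<pi> e \<in> {a,b}}"
      using g_eq g_vertex card_KG_vertex by blast+
    then show "card {e \<in> ?N. \<pi> e \<in> {a,b}} = 2" by simp
  qed
  have "\<forall>v\<in>KG s. g v = the_inv_into ?N \<pi> ` v"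
    using g_eq preimage_eq_the_inv_into_image[OF bij] KG_subset by simp
  with bij_betw_the_inv_into[OF bij] show ?thesis by blast
qed

lemma induced_endo_preserves_adj:
  assumes "1 \<le> s" "KG_endo s g" "\<forall>v\<in>KG s. g v = P ` v" "stable_adj s a b"
  shows "stable_adj s (P a) (P b)"
proof -
  have "{a,b} \<in> KG s" using assms(1,4) doubleton_in_KG_iff by blast
  then have "P ` {a,b} \<in> KG s" using assms(2,3) unfolding graph_hom_def by metis
  then show ?thesis using doubleton_in_KG_iff[OF assms(1)] by simp
qed

lemma bij_reflects_stable_adj:
  assumes s: "1 \<le> s" and bij: "bij_betw P {1..2*s+2} {1..2*s+2}"
    and preserves: "\<And>a b. stable_adj s a b \<Longrightarrow> stable_adj s (P a) (P b)"
    and a: "a \<in> {1..2*s+2}" and b: "b \<in> {1..2*s+2}" and "stable_adj s (P a) (P b)"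
  shows "stable_adj s a b"
proof -
  let ?nbrs = "\<lambda>c. {d. stable_adj s c d}"
  have inj: "inj_on P {1..2*s+2}" using bij by (simp add: bij_betw_def)
  have nbrs_range: "?nbrs c \<subseteq> {1..2*s+2}" for c
    using stable_adj_range stable_adj_sym by blast
  have "P ` ?nbrs a \<subseteq> ?nbrs (P a)" using preserves by blast
  moreover have "card (P ` ?nbrs a) = card (?nbrs (P a))"
    using card_stable_neighbours[OF s] a bij_betw_apply[OF bij a]
      card_image[OF inj_on_subset[OF inj nbrs_range]] by simp
  ultimately have "P ` ?nbrs a = ?nbrs (P a)"
    by (metis card_subset_eq finite_atLeastAtMost finite_subset nbrs_range)
  with \<open>stable_adj s (P a) (P b)\<close> obtain d where "stable_adj s a d" "P b = P d" by blast
  moreover have "d \<in> {1..2*s+2}" using calculation(1) nbrs_range by blast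
  ultimately show ?thesis using inj_onD[OF inj _ b] by metis
qed

lemma graph_hom_cart_prod_section_fst:
  assumes "graph_hom (cart_prod_verts V1 V2) (cart_prod_adj E1 E2) W F f" "y \<in> V2"
  shows "graph_hom V1 E1 W F (\<lambda>x. f (x, y))"
  using assms unfolding graph_hom_def cart_prod_verts_def cart_prod_adj_def by auto

lemma graph_hom_cart_prod_section_snd:
  assumes "graph_hom (cart_prod_verts V1 V2) (cart_prod_adj E1 E2) W F f" "x \<in> V1"
  shows "graph_hom V2 E2 W F (\<lambda>y. f (x, y))"
  using assms unfolding graph_hom_def cart_prod_verts_def cart_prod_adj_def by auto

lemma square_hom_sections_meet:
  assumes s: "3 \<le> s"
    and f: "graph_hom (cart_prod_verts (KG s) (KG s))
      (cart_prod_adj stab_kneser_adj stab_kneser_adj) (KG s) stab_kneser_adj f"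
    and P: "\<forall>v\<in>KG s. f (v, {1, s+1}) = P ` v" and Q: "\<forall>v\<in>KG s. f (v, {1, s+2}) = Q ` v"
    and ab: "stable_adj s a b"
  shows "\<exists>c. {P a, P b} \<inter> {Q a, Q b} = {c}"
proof -
  have s1: "1 \<le> s" using s by simp
  have x: "{a,b} \<in> KG s" using ab doubleton_in_KG_iff[OF s1] by blast
  have y: "{1, s+1} \<in> KG s" "{1, s+2} \<in> KG s"
    unfolding doubleton_in_KG_iff[OF s1] by (simp_all add: stable_adj_def)
  obtain R where R: "bij_betw R {1..2*s+2} {1..2*s+2}" "\<forall>v\<in>KG s. f ({a,b}, v) = R ` v"
    using endo_is_induced[OF s graph_hom_cart_prod_section_snd[OF f x]] by blast
  have "P ` {a,b} = R ` {1, s+1}" "Q ` {a,b} = R ` {1, s+2}"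
    using P Q R(2) x y by metis+
  moreover have "R (s+1) \<noteq> R 1" "R (s+2) \<noteq> R 1" "R (s+1) \<noteq> R (s+2)"
    using inj_onD[OF bij_betw_imp_inj_on[OF R(1)]] s1 by fastforce+
  ultimately have "{P a, P b} \<inter> {Q a, Q b} = {R 1}" by auto
  then show ?thesis by blast
qed

subsection \<open>Two automorphisms meeting on every edge\<close>

context
  fixes s :: nat and P Q :: "nat \<Rightarrow> nat"
  assumes s: "3 \<le> s"
    and bij_P: "bij_betw P {1..2*s+2} {1..2*s+2}"
    and bij_Q: "bij_betw Q {1..2*s+2} {1..2*s+2}"
    and P_adj: "\<And>a b. stable_adj s a b \<Longrightarrow> stable_adj s (P a) (P b)"
    and Q_adj: "\<And>a b. stable_adj s a b \<Longrightarrow> stable_adj s (Q a) (Q b)"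
    and meet: "\<And>a b. stable_adj s a b \<Longrightarrow> \<exists>c. {P a, P b} \<inter> {Q a, Q b} = {c}"
begin

lemma agreement_propagates:
  assumes agree: "P u = Q u" and uv: "stable_adj s u v" and vw: "stable_adj s v w"
  shows "P w = Q w"
proof -
  have s1: "1 \<le> s" using s by simp
  have range: "u \<in> {1..2*s+2}" "v \<in> {1..2*s+2}" "w \<in> {1..2*s+2}"
    using uv vw stable_adj_range stable_adj_sym by blast+
  have "P v \<noteq> Q v"
  proof
    assume "P v = Q v"
    obtain c where "{P u, P v} \<inter> {Q u, Q v} = {c}" using meet[OF uv] by blast
    with agree \<open>P v = Q v\<close> have "{P u, P v} = {c}" by simp
    then have "P u = P v" by auto
    then show False
      using inj_onD[OF bij_betw_imp_inj_on[OF bij_P] _ range(1,2)] stable_adj_neq[OF s1 uv] by blast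
  qed
  obtain c where c: "{P v, P w} \<inter> {Q v, Q w} = {c}" using meet[OF vw] by blast
  then have "c \<in> {P v, P w}" "c \<in> {Q v, Q w}" by blast+
  with \<open>P v \<noteq> Q v\<close> consider "P v = Q w" | "P w = Q v" | "P w = Q w" by blast
  then show ?thesis
  proof cases
    case 1 \<comment> \<open>Q maps {u, w} onto the edge {P u, P v}, closing the triangle u v w.\<close>
    then have "stable_adj s (Q u) (Q w)" using P_adj[OF uv] agree by simp
    then have "stable_adj s u w" using bij_reflects_stable_adj[OF s1 bij_Q Q_adj] range by blast
    then show ?thesis using stable_adj_triangle_free[OF s uv vw] by blast
  next
    case 2
    then have "stable_adj s (P u) (P w)" using Q_adj[OF uv] agree by simp
    then have "stable_adj s u w" using bij_reflects_stable_adj[OF s1 bij_P P_adj] range by blast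
    then show ?thesis using stable_adj_triangle_free[OF s uv vw] by blast
  qed
qed

lemma nowhere_agree:
  assumes u: "u \<in> {1..2*s+2}"
  shows "P u \<noteq> Q u"
proof
  assume "P u = Q u"
  have agree_iff: "(P c = Q c) = (P 1 = Q 1)" if "c \<in> {1..2*s+2}" for c
  proof (rule eq_on_interval_if_eq_Suc[OF _ that])
    fix c assume "1 \<le> c" "c < 2*s+2"
    then obtain d where cd: "stable_adj s c d" and Suc_cd: "stable_adj s (Suc c) d"
      using stable_adj_common_neighbour by blast
    show "(P c = Q c) = (P (Suc c) = Q (Suc c))"
      using agreement_propagates[OF _ cd stable_adj_sym[OF Suc_cd]]
        agreement_propagates[OF _ Suc_cd stable_adj_sym[OF cd]] by auto
  qed
  have "P 1 = Q 1" using agree_iff[OF u] \<open>P u = Q u\<close> by blast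
  moreover have "P (s+1) = Q (s+1)" using agree_iff[of "s+1"] \<open>P 1 = Q 1\<close> by simp
  moreover obtain c where "{P 1, P (s+1)} \<inter> {Q 1, Q (s+1)} = {c}"
    using meet[of 1 "s+1"] unfolding stable_adj_def by auto
  ultimately have "{P 1, P (s+1)} = {c}" by simp
  then have "P 1 = P (s+1)" by auto
  then show False
    using inj_onD[OF bij_betw_imp_inj_on[OF bij_P], of 1 "s+1"] s by simp
qed

lemma meeting_automorphisms_absurd: False
proof -
  let ?N = "{1..2*s+2}"
  have s1: "1 \<le> s" using s by simp
  define \<phi> where "\<phi> u = the_inv_into ?N Q (P u)" for u
  have inv: "the_inv_into ?N Q (Q x) = x" if "x \<in> ?N" for x
    using the_inv_into_f_f[OF bij_betw_imp_inj_on[OF bij_Q] that] .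
  have "KG s \<subseteq> (\<lambda>u. {u, \<phi> u}) ` ?N"
  proof
    fix v assume "v \<in> KG s"
    then obtain a b where ab: "stable_adj s a b" "v = {a,b}" using KG_iff[OF s1] by blast
    have range: "a \<in> ?N" "b \<in> ?N" using ab(1) stable_adj_range stable_adj_sym by blast+
    obtain c where c: "{P a, P b} \<inter> {Q a, Q b} = {c}" using meet[OF ab(1)] by blast
    then have "c \<in> {P a, P b}" "c \<in> {Q a, Q b}" by blast+
    with nowhere_agree[OF range(1)] nowhere_agree[OF range(2)]
    consider "P a = Q b" | "P b = Q a" by blast
    then show "v \<in> (\<lambda>u. {u, \<phi> u}) ` ?N"
    proof cases
      case 1
      then have "v = {a, \<phi> a}" using ab(2) inv[OF range(2)] by (simp add: \<phi>_def)
      then show ?thesis using range(1) by blast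
    next
      case 2
      then have "v = {b, \<phi> b}" using ab(2) inv[OF range(1)] by (simp add: \<phi>_def insert_commute)
      then show ?thesis using range(2) by blast
    qed
  qed
  then have "card (KG s) \<le> card ((\<lambda>u. {u, \<phi> u}) ` ?N)" by (simp add: card_mono)
  also have "\<dots> \<le> card ?N" by (rule card_image_le) simp
  finally show False using card_KG[OF s1] by simp
qed

end

theorem mainTheorem5:
  fixes s :: nat
  assumes "s \<ge> 3"
  shows "\<not> (\<exists>f. graph_hom
            (cart_prod_verts (stab_kneser_verts (2*s+2) 2 s) (stab_kneser_verts (2*s+2) 2 s))
            (cart_prod_adj stab_kneser_adj stab_kneser_adj)
            (stab_kneser_verts (2*s+2) 2 s) stab_kneser_adj f)"
proof
  assume "\<exists>f. graph_hom (cart_prod_verts (KG s) (KG s))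
            (cart_prod_adj stab_kneser_adj stab_kneser_adj) (KG s) stab_kneser_adj f"
  then obtain f where f: "graph_hom (cart_prod_verts (KG s) (KG s))
      (cart_prod_adj stab_kneser_adj stab_kneser_adj) (KG s) stab_kneser_adj f" by blast
  have s1: "1 \<le> s" using assms by simp
  have y: "{1, s+1} \<in> KG s" "{1, s+2} \<in> KG s"
    unfolding doubleton_in_KG_iff[OF s1] by (simp_all add: stable_adj_def)
  note section_fst = graph_hom_cart_prod_section_fst[OF f]
  obtain P where P: "bij_betw P {1..2*s+2} {1..2*s+2}" "\<forall>v\<in>KG s. f (v, {1, s+1}) = P ` v"
    using endo_is_induced[OF assms section_fst[OF y(1)]] by blast
  obtain Q where Q: "bij_betw Q {1..2*s+2} {1..2*s+2}" "\<forall>v\<in>KG s. f (v, {1, s+2}) = Q ` v"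
    using endo_is_induced[OF assms section_fst[OF y(2)]] by blast
  show False
  proof (rule meeting_automorphisms_absurd[OF assms P(1) Q(1)])
    show "stable_adj s (P a) (P b)" if "stable_adj s a b" for a b
      using induced_endo_preserves_adj[OF s1 section_fst[OF y(1)] P(2) that] .
    show "stable_adj s (Q a) (Q b)" if "stable_adj s a b" for a b
      using induced_endo_preserves_adj[OF s1 section_fst[OF y(2)] Q(2) that] .
    show "\<exists>c. {P a, P b} \<inter> {Q a, Q b} = {c}" if "stable_adj s a b" for a b
      using square_hom_sections_meet[OF assms f P(2) Q(2) that] .
  qed
qed

end
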